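(* Let $\sigma_0$ be a strictly positive random variable with $L(x):=1/\mathbb{P}(\sigma_0>x)$ slowly varying at infinity (i.e. $\lim_{u\to\infty}L(uv)/L(u)=1$ for every $v>0$), and let $Y=\{Y_n\}_{n\in\mathbb{N}}$ be i.i.d. with the law of $\sigma_0$. Let $h_t$ be any function with $h_t\to\infty$, $h_t^2=o(r_t)$, and such that, for all sufficiently large $t$, \[ L(\ell_t/h_t^3)>L(\ell_t)(1-1/h_t)\quad\text{and}\quad L(\ell_th_t^3)<L(\ell_t)(1+1/h_t).\] Then, as $t\to\infty$, \[ \mathbb{P}\Big(\bar s^{h_t}_{\ell_t}<\frac{\ell_t}{h_t^3}\Big)\to1.\]
   Context: $\ell_t:=\min\{s\ge0: sL(s)\ge t\}$ and $r_t:=L(\ell_t)$. For $n\ge0$, $M_n:=\max\{Y_i: i\le\lfloor n\rfloor\}$. For a level $l>0$, $n_l:=\min\{n\in\mathbb{N}: M_n>l\}$, and for $h>0$, $\bar s^h_l:=\sum_{n\in\mathbb{N}:\,1\le|n-n_l|<L(l)/h}Y_n$. *)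

theory Defs
  imports "HOL-Probability.Probability" "HOL-Library.Landau_Symbols"
begin

definition tailL :: "'a measure \<Rightarrow> ('a \<Rightarrow> real) \<Rightarrow> real \<Rightarrow> real" where
  "tailL M X x = 1 / measure M {\<omega> \<in> space M. X \<omega> > x}"

definition ellt :: "(real \<Rightarrow> real) \<Rightarrow> real \<Rightarrow> real" where
  "ellt L t = Inf {s. 0 \<le> s \<and> t \<le> s * L s}"

definition rt :: "(real \<Rightarrow> real) \<Rightarrow> real \<Rightarrow> real" where
  "rt L t = L (ellt L t)"

definition runmax :: "(nat \<Rightarrow> 'a \<Rightarrow> real) \<Rightarrow> real \<Rightarrow> 'a \<Rightarrow> real" where
  "runmax Y n \<omega> = Max {Y i \<omega> | i. i \<le> nat \<lfloor>n\<rfloor>}"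

definition first_exceed :: "(nat \<Rightarrow> 'a \<Rightarrow> real) \<Rightarrow> real \<Rightarrow> 'a \<Rightarrow> nat" where
  "first_exceed Y l \<omega> = (LEAST n::nat. runmax Y (real n) \<omega> > l)"

definition sbar :: "(real \<Rightarrow> real) \<Rightarrow> (nat \<Rightarrow> 'a \<Rightarrow> real) \<Rightarrow> real \<Rightarrow> real \<Rightarrow> 'a \<Rightarrow> real" where
  "sbar L Y h l \<omega> =
     (\<Sum>n \<in> {n::nat. 1 \<le> \<bar>int n - int (first_exceed Y l \<omega>)\<bar> \<and>
                    real_of_int \<bar>int n - int (first_exceed Y l \<omega>)\<bar> < L l / h}. Y n \<omega>)"

end

theory Submission
  imports Defs
begin

text \<open>
  Put \<open>x = \<ell>/h^3\<close>, \<open>q = P(\<sigma>0 \<le> \<ell>)\<close> and \<open>R = L(\<ell>)/h\<close> (with \<open>\<ell> = \<ell>\<^sub>t, h = h\<^sub>t\<close>). A window sum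
  can reach \<open>x\<close> only if the capped ratios \<open>min(1, Y\<^sub>n/x)\<close> over the window add up to at least 1;
  capping provides first moments although \<open>\<sigma>0\<close> need not be integrable. The window omits the
  index \<open>n\<^sub>\<ell> = k\<close>, so by independence \<open>{n\<^sub>\<ell> = k, s \<ge> x}\<close> has probability at most
  \<open>2R P(\<sigma>0 > \<ell>) E min(1, \<sigma>0/x) q^(k-1)\<close>, and summing over \<open>k\<close> gives
  \<open>P(s \<ge> x) \<le> 2R E min(1, \<sigma>0/x) / q\<close>.

  Slow variation gives \<open>P(\<sigma>0 > z) \<le> 5/4 P(\<sigma>0 > 2z)\<close> for large \<open>z\<close>. Halving \<open>x\<close> repeatedly yields
  \<open>E min(1, \<sigma>0/x) \<le> 4 P(\<sigma>0 > x) + O(1/x)\<close>, and doubling \<open>y\<close> shows \<open>P(\<sigma>0 > y)^2 y \<longrightarrow> \<infinity>\<close>.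
  As \<open>P(\<sigma>0 > x) < 2 P(\<sigma>0 > \<ell>)\<close> by the lower regularity hypothesis and \<open>h^2 \<le> L(\<ell>)\<close>
  eventually, the bound is \<open>O(1/h) + O(1 / (P(\<sigma>0 > \<ell>)^2 \<ell>)) \<longrightarrow> 0\<close>.
\<close>

definition capped_ratio :: "real \<Rightarrow> real \<Rightarrow> real" where
  "capped_ratio x y = max 0 (min 1 (y / x))"

lemma capped_ratio_measurable [measurable]: "capped_ratio x \<in> borel_measurable borel"
  unfolding capped_ratio_def by measurable

lemma capped_ratio_nonneg: "0 \<le> capped_ratio x y"
  and capped_ratio_le_one: "capped_ratio x y \<le> 1"
  unfolding capped_ratio_def by auto

lemma capped_ratio_le_indicator_plus_half:
  assumes "x > 0"
  shows "capped_ratio x y \<le> indicator {x/2<..} y + capped_ratio (x/2) y / 2"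
  using assms by (auto simp: capped_ratio_def indicator_def field_simps max_def min_def)

lemma one_le_sum_capped_ratio:
  fixes a :: "nat \<Rightarrow> real"
  assumes "finite W" "x > 0" "x \<le> (\<Sum>n\<in>W. a n)"
  shows "1 \<le> (\<Sum>n\<in>W. capped_ratio x (a n))"
proof (cases "\<exists>n\<in>W. x < a n")
  case True
  then obtain n where n: "n \<in> W" "x < a n" by auto
  hence "capped_ratio x (a n) = 1" using assms(2) by (simp add: capped_ratio_def)
  moreover have "capped_ratio x (a n) \<le> (\<Sum>n\<in>W. capped_ratio x (a n))"
    using n(1) assms(1) by (intro member_le_sum) (auto simp: capped_ratio_nonneg)
  ultimately show ?thesis by simp
next
  case False
  then have "(\<Sum>n\<in>W. a n / x) \<le> (\<Sum>n\<in>W. capped_ratio x (a n))"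
    using assms(2) by (intro sum_mono) (auto simp: capped_ratio_def)
  moreover have "1 \<le> (\<Sum>n\<in>W. a n / x)"
    using assms by (simp add: sum_divide_distrib[symmetric] le_divide_eq_1_pos)
  ultimately show ?thesis by linarith
qed

lemma dyadic_recursion_bound:
  fixes T e :: "real \<Rightarrow> real"
  assumes y0: "y0 > 0" and T_nonneg: "\<And>y. 0 \<le> T y"
    and doubling: "\<And>z. y0 \<le> z \<Longrightarrow> T z \<le> 5/4 * T (2*z)"
    and e_le_one: "\<And>x. x > 0 \<Longrightarrow> e x \<le> 1"
    and e_rec: "\<And>x. x > 0 \<Longrightarrow> e x \<le> T (x/2) + e (x/2) / 2"
    and x: "y0 \<le> x"
  shows "e x \<le> 4 * T x + 2 * y0 / x"
proof -
  have small: "e x \<le> 4 * T x + 2 * y0 / x" if "y0 \<le> x" "x \<le> 2 * y0" for x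
  proof -
    have "1 \<le> 2 * y0 / x" using that y0 by (simp add: field_simps)
    then show ?thesis using e_le_one[of x] T_nonneg[of x] that y0 by linarith
  qed
  have "e x \<le> 4 * T x + 2 * y0 / x" if "y0 \<le> x" "x \<le> 2^m * y0" for m x
    using that
  proof (induction m arbitrary: x)
    case 0
    then show ?case using y0 by (intro small) auto
  next
    case (Suc m)
    show ?case
    proof (cases "x \<le> 2 * y0")
      case True
      then show ?thesis using small Suc.prems by simp
    next
      case False
      then have x_pos: "x > 0" using y0 by simp
      have "e (x/2) \<le> 4 * T (x/2) + 2 * y0 / (x/2)" using Suc False by (intro Suc.IH) auto
      then have "e (x/2) / 2 \<le> 2 * T (x/2) + 2 * y0 / x" using x_pos by (simp add: field_simps)
      moreover have "e x \<le> T (x/2) + e (x/2) / 2" using e_rec[OF x_pos] .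
      moreover have "T (x/2) \<le> 5/4 * T x" using doubling[of "x/2"] False by simp
      ultimately show ?thesis using T_nonneg[of x] by linarith
    qed
  qed
  moreover obtain m where "x / y0 < 2^m" using real_arch_pow[of 2 "x / y0"] by auto
  then have "x \<le> 2^m * y0" using y0 by (simp add: field_simps)
  ultimately show ?thesis using x by blast
qed

lemma filterlim_at_top_dyadic_growth:
  fixes g :: "real \<Rightarrow> real"
  assumes y0: "y0 > 0" and b: "b > 0" and c: "c > 1"
    and base: "\<And>y. y0 \<le> y \<Longrightarrow> y \<le> 2 * y0 \<Longrightarrow> b \<le> g y"
    and growth: "\<And>y. y0 \<le> y \<Longrightarrow> c * g y \<le> g (2 * y)"
  shows "filterlim g at_top at_top"
proof -
  have bounded_upto: "b \<le> g y" if "y0 \<le> y" "y \<le> 2^n * y0" for n y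
    using that
  proof (induction n arbitrary: y)
    case 0
    then show ?case using base y0 by simp
  next
    case (Suc n)
    show ?case
    proof (cases "y \<le> 2 * y0")
      case True
      then show ?thesis using base Suc.prems by simp
    next
      case False
      then have "b \<le> g (y/2)" using Suc by (intro Suc.IH) auto
      moreover have "c * g (y/2) \<le> g y" using growth[of "y/2"] False by simp
      ultimately show ?thesis using b c by (smt (verit) mult_le_cancel_right1)
    qed
  qed
  have bounded: "b \<le> g y" if "y0 \<le> y" for y
  proof -
    obtain n where "y / y0 < 2^n" using real_arch_pow[of 2 "y / y0"] by auto
    then have "y \<le> 2^n * y0" using y0 by (simp add: field_simps)
    then show ?thesis using bounded_upto that by blast
  qed
  have grows: "c^m * b \<le> g y" if "2^m * y0 \<le> y" for m y
    using that
  proof (induction m arbitrary: y)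
    case 0
    then show ?case using bounded by simp
  next
    case (Suc m)
    have "y0 \<le> 2^m * y0" using y0 by simp
    then have "y0 \<le> y/2" and "c^m * b \<le> g (y/2)" using Suc by auto
    then have "c * (c^m * b) \<le> c * g (y/2)" using c by simp
    then show ?case using growth[OF \<open>y0 \<le> y/2\<close>] by simp
  qed
  show ?thesis
    unfolding filterlim_at_top
  proof
    fix Z :: real
    obtain m where "Z / b < c^m" using real_arch_pow[OF c] by blast
    then have "Z \<le> c^m * b" using b by (simp add: field_simps)
    then show "eventually (\<lambda>y. Z \<le> g y) at_top"
      unfolding eventually_at_top_linorder using grows order_trans by blast
  qed
qed

lemma slowly_varying_tail_pos:
  fixes T :: "real \<Rightarrow> real"
  assumes antimono: "\<And>a b. a \<le> b \<Longrightarrow> T b \<le> T a" and nonneg: "\<And>y. 0 \<le> T y"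
    and slow: "((\<lambda>u. (1 / T (u * 2)) / (1 / T u)) \<longlongrightarrow> 1) at_top"
  shows "T y > 0"
proof (rule ccontr)
  assume "\<not> T y > 0"
  then have vanish: "T u = 0" if "y \<le> u" for u
    using antimono[OF that] nonneg[of u] nonneg[of y] by simp
  \<comment> \<open>then the ratio is eventually \<open>0\<close>, since \<open>1 / 0 = 0\<close>\<close>
  have "eventually (\<lambda>u. (1 / T (u * 2)) / (1 / T u) = 0) at_top"
    using eventually_ge_at_top[of y] by eventually_elim (simp add: vanish)
  then have "((\<lambda>u. (1 / T (u * 2)) / (1 / T u)) \<longlongrightarrow> 0) at_top"
    by (rule tendsto_eventually)
  from tendsto_unique[OF _ slow this] show False by simp
qed

lemma slowly_varying_tail_doubling:
  fixes T :: "real \<Rightarrow> real"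
  assumes pos: "\<And>y. T y > 0"
    and slow: "((\<lambda>u. (1 / T (u * 2)) / (1 / T u)) \<longlongrightarrow> 1) at_top"
  obtains y0 where "y0 > 0" "\<And>z. y0 \<le> z \<Longrightarrow> T z \<le> 5/4 * T (2 * z)"
proof -
  have "eventually (\<lambda>u. (1 / T (u * 2)) / (1 / T u) < 5/4) at_top"
    by (rule order_tendstoD(2)[OF slow]) simp
  then obtain N where N: "\<And>u. N \<le> u \<Longrightarrow> T u / T (u * 2) < 5/4"
    by (auto simp: eventually_at_top_linorder)
  show ?thesis
  proof (rule that[of "max N 1"])
    fix z assume "max N 1 \<le> z"
    then show "T z \<le> 5/4 * T (2 * z)"
      using N[of z] pos[of "z * 2"] by (simp add: field_simps mult.commute)
  qed simp
qed

lemma filterlim_tail_sq_mult_at_top: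
  fixes T :: "real \<Rightarrow> real"
  assumes y0: "y0 > 0" and pos: "\<And>y. T y > 0"
    and antimono: "\<And>a b. a \<le> b \<Longrightarrow> T b \<le> T a"
    and doubling: "\<And>z. y0 \<le> z \<Longrightarrow> T z \<le> 5/4 * T (2 * z)"
  shows "filterlim (\<lambda>y. T y ^ 2 * y) at_top at_top"
proof (rule filterlim_at_top_dyadic_growth[OF y0 _ _ _ _])
  show "0 < T (2 * y0) ^ 2 * y0" using pos[of "2 * y0"] y0 by simp
  show "T (2 * y0) ^ 2 * y0 \<le> T y ^ 2 * y" if "y0 \<le> y" "y \<le> 2 * y0" for y
    using that pos antimono[OF that(2)] y0 by (intro mult_mono power_mono) (auto intro: less_imp_le)
  show "32/25 * (T y ^ 2 * y) \<le> T (2 * y) ^ 2 * (2 * y)" if "y0 \<le> y" for y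
  proof -
    have "T y ^ 2 \<le> (5/4 * T (2 * y)) ^ 2" using doubling[OF that] pos by (intro power_mono) (auto intro: less_imp_le)
    then show ?thesis using that y0 by (simp add: power_mult_distrib power_divide)
  qed
qed simp

lemma filterlim_at_top_of_antimono:
  fixes T :: "real \<Rightarrow> real" and l :: "'b \<Rightarrow> real"
  assumes pos: "\<And>y. 0 < T y" and antimono: "\<And>a b. a \<le> b \<Longrightarrow> T b \<le> T a"
    and lim: "filterlim (\<lambda>t. 1 / T (l t)) at_top F"
  shows "filterlim l at_top F"
  unfolding filterlim_at_top
proof
  fix Z :: real
  show "eventually (\<lambda>t. Z \<le> l t) F"
    using lim[unfolded filterlim_at_top_dense, rule_format, of "1 / T Z"]
  proof eventually_elim
    case (elim t)
    then have "T (l t) < T Z" using pos[of Z] pos[of "l t"] by (simp add: field_simps)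
    then show ?case using antimono[of "l t" Z] by linarith
  qed
qed

lemma tendsto_sbar_error_bound:
  fixes T :: "real \<Rightarrow> real" and h l :: "'b \<Rightarrow> real"
  assumes y0: "y0 > 0" and pos: "\<And>y. 0 < T y" and antimono: "\<And>a b. a \<le> b \<Longrightarrow> T b \<le> T a"
    and doubling: "\<And>z. y0 \<le> z \<Longrightarrow> T z \<le> 5/4 * T (2 * z)"
    and h: "filterlim h at_top F" and h_sq: "eventually (\<lambda>t. h t ^ 2 \<le> 1 / T (l t)) F"
  shows "((\<lambda>t. 22 / h t + 6 * y0 / (T (l t) ^ 2 * l t)) \<longlongrightarrow> 0) F"
proof -
  have "filterlim (\<lambda>t. 1 / T (l t)) at_top F"
    using filterlim_pow_at_top[OF _ h, of 2] h_sq by (rule filterlim_at_top_mono) simp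
  then have l: "filterlim l at_top F"
    using filterlim_at_top_of_antimono[of T l F, OF pos antimono] by blast
  have "((\<lambda>t. 1 / (T (l t) ^ 2 * l t)) \<longlongrightarrow> 0) F"
    using tendsto_inverse_0_at_top[OF filterlim_compose[OF
        filterlim_tail_sq_mult_at_top[of y0 T, OF y0 pos antimono doubling] l]]
    by (simp add: inverse_eq_divide)
  with tendsto_divide_0[OF tendsto_const filterlim_at_top_imp_at_infinity[OF h]]
  have "((\<lambda>t. 22 / h t + 6 * y0 * (1 / (T (l t) ^ 2 * l t))) \<longlongrightarrow> 0 + 6 * y0 * 0) F"
    by (intro tendsto_add tendsto_mult tendsto_const)
  then show ?thesis by simp
qed

lemma tail_threshold_bounds:
  fixes T :: "real \<Rightarrow> real"
  assumes pos: "\<And>y. 0 < T y" and antimono: "\<And>a b. a \<le> b \<Longrightarrow> T b \<le> T a"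
    and h: "2 \<le> h" "2 / T y0 \<le> h" and h_sq: "h^2 \<le> 1 / T l"
    and ratio: "1 / T l * (1 - 1/h) < 1 / T (l / h^3)"
  shows "T l \<le> 1/4" and "T (l / h^3) < 2 * T l" and "y0 < l / h^3"
proof -
  have "4 \<le> h^2" using h(1) by (simp add: power2_eq_square mult_mono[of 2 h 2 h, simplified])
  then have "4 * T l \<le> h^2 * T l" using pos[of l] by (intro mult_right_mono) auto
  moreover have "h^2 * T l \<le> 1" using h_sq pos[of l] by (simp add: field_simps)
  ultimately show "T l \<le> 1/4" by linarith
  have "1/2 \<le> 1 - 1/h" using h(1) by (simp add: field_simps)
  then have "1 / T l * (1/2) \<le> 1 / T l * (1 - 1/h)" using pos[of l] by (intro mult_left_mono) auto
  also note ratio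
  finally show T_ratio: "T (l / h^3) < 2 * T l" using pos[of l] pos[of "l / h^3"] by (simp add: field_simps)
  have "h \<le> h^2" using h(1) by (simp add: power2_eq_square)
  then have "2 / T y0 \<le> 1 / T l" using h(2) h_sq by linarith
  then have "2 * T l \<le> T y0" using pos[of l] pos[of y0] by (simp add: field_simps)
  then show "y0 < l / h^3" using T_ratio antimono[of "l / h^3" y0] by linarith
qed

definition window :: "real \<Rightarrow> nat \<Rightarrow> nat set" where
  "window R k = {n. 1 \<le> \<bar>int n - int k\<bar> \<and> real_of_int \<bar>int n - int k\<bar> < R}"

lemma sbar_eq_sum_window: "sbar L Y h l \<omega> = (\<Sum>n\<in>window (L l / h) (first_exceed Y l \<omega>). Y n \<omega>)"
  by (simp add: sbar_def window_def)

lemma center_notin_window: "k \<notin> window R k"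
  by (simp add: window_def)

lemma window_subset: "window R k \<subseteq> {k - nat (\<lceil>R\<rceil> - 1)..k + nat (\<lceil>R\<rceil> - 1)} - {k}"
proof
  fix n assume "n \<in> window R k"
  then have "\<bar>int n - int k\<bar> < \<lceil>R\<rceil>" "n \<noteq> k"
    by (auto simp: window_def less_ceiling_iff)
  then show "n \<in> {k - nat (\<lceil>R\<rceil> - 1)..k + nat (\<lceil>R\<rceil> - 1)} - {k}" by auto
qed

lemma finite_window: "finite (window R k)"
  by (rule finite_subset[OF window_subset]) simp

lemma card_window_le:
  assumes "R \<ge> 0"
  shows "real (card (window R k)) \<le> 2 * R"
proof -
  let ?m = "nat (\<lceil>R\<rceil> - 1)"
  have "card (window R k) \<le> card ({k - ?m..k + ?m} - {k})"
    by (rule card_mono[OF _ window_subset]) simp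
  also have "\<dots> \<le> 2 * ?m" by (simp add: card_Diff_singleton_if)
  finally show ?thesis using assms by linarith
qed

lemma first_exceed_eq_Least: "first_exceed Y l \<omega> = (LEAST n. \<exists>i\<le>n. l < Y i \<omega>)"
proof -
  have "{Y i \<omega> |i. i \<le> nat \<lfloor>real n\<rfloor>} = (\<lambda>i. Y i \<omega>) ` {..n}" for n by auto
  then show ?thesis by (simp add: first_exceed_def runmax_def Max_gr_iff Bex_def)
qed

lemma first_exceed_eqI:
  assumes "l < Y k \<omega>" "\<forall>i<k. Y i \<omega> \<le> l"
  shows "first_exceed Y l \<omega> = k"
  unfolding first_exceed_eq_Least
proof (rule Least_equality)
  show "\<exists>i\<le>k. l < Y i \<omega>" using assms by auto
  fix n assume "\<exists>i\<le>n. l < Y i \<omega>"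
  then show "k \<le> n" using assms(2) by (meson le_trans not_le)
qed

locale iid_sequence = prob_space M for M :: "'a measure" +
  fixes s0 :: "'a \<Rightarrow> real" and Y :: "nat \<Rightarrow> 'a \<Rightarrow> real"
  assumes s0_measurable [measurable]: "s0 \<in> borel_measurable M"
    and Y_measurable [measurable]: "\<And>n. Y n \<in> borel_measurable M"
    and Y_indep: "indep_vars (\<lambda>_. borel) Y UNIV"
    and Y_distr: "\<And>n. distr M borel (Y n) = distr M borel s0"
begin

abbreviation tail :: "real \<Rightarrow> real" where
  "tail y \<equiv> prob {\<omega> \<in> space M. y < s0 \<omega>}"

abbreviation capped_mean :: "real \<Rightarrow> real" where
  "capped_mean x \<equiv> expectation (\<lambda>\<omega>. capped_ratio x (s0 \<omega>))"

lemma tail_antimono: "a \<le> b \<Longrightarrow> tail b \<le> tail a"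
  by (rule finite_measure_mono) auto

lemma prob_le_eq_one_minus_tail: "prob {\<omega> \<in> space M. s0 \<omega> \<le> l} = 1 - tail l"
proof -
  have "{\<omega> \<in> space M. s0 \<omega> \<le> l} = space M - {\<omega> \<in> space M. l < s0 \<omega>}" by auto
  then show ?thesis by (simp add: prob_compl)
qed

lemma expectation_indicator_s0:
  "A \<in> sets borel \<Longrightarrow> expectation (\<lambda>\<omega>. indicator A (s0 \<omega>)) = prob {\<omega> \<in> space M. s0 \<omega> \<in> A}"
  by (subst Bochner_Integration.integral_cong[where g = "indicator {\<omega> \<in> space M. s0 \<omega> \<in> A}"])
     (auto simp: indicator_def)

lemma capped_mean_nonneg: "0 \<le> capped_mean x"
  by (simp add: capped_ratio_nonneg)

lemma integrable_capped_ratio: "integrable M (\<lambda>\<omega>. capped_ratio x (s0 \<omega>))"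
  by (intro integrable_const_bound[where B = 1]) (auto simp: capped_ratio_nonneg capped_ratio_le_one)

lemma capped_mean_le_one: "capped_mean x \<le> 1"
  using integral_mono[OF integrable_capped_ratio integrable_const capped_ratio_le_one] by (simp add: prob_space)

lemma capped_mean_halve:
  assumes "x > 0"
  shows "capped_mean x \<le> tail (x/2) + capped_mean (x/2) / 2"
proof -
  have "capped_mean x \<le> expectation (\<lambda>\<omega>. indicator {x/2<..} (s0 \<omega>) + capped_ratio (x/2) (s0 \<omega>) / 2)"
    using assms by (intro integral_mono integrable_capped_ratio capped_ratio_le_indicator_plus_half
        Bochner_Integration.integrable_add integrable_divide integrable_const_bound[where B = 1]) auto
  also have "\<dots> = tail (x/2) + capped_mean (x/2) / 2"
    by (simp add: integrable_capped_ratio integrable_const_bound[where B = 1] expectation_indicator_s0)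
  finally show ?thesis .
qed

lemma capped_mean_le:
  assumes "y0 > 0" and "\<And>z. y0 \<le> z \<Longrightarrow> tail z \<le> 5/4 * tail (2 * z)" and "y0 \<le> x"
  shows "capped_mean x \<le> 4 * tail x + 2 * y0 / x"
  using assms capped_mean_le_one capped_mean_halve by (intro dyadic_recursion_bound) auto

lemma
  assumes "finite I" and "\<And>i. i \<in> I \<Longrightarrow> g i \<in> borel_measurable borel"
    and "\<And>i y. i \<in> I \<Longrightarrow> \<bar>g i y\<bar> \<le> (1::real)"
  shows expectation_prod_Y: "expectation (\<lambda>\<omega>. \<Prod>i\<in>I. g i (Y i \<omega>)) = (\<Prod>i\<in>I. expectation (\<lambda>\<omega>. g i (s0 \<omega>)))"
    and integrable_prod_Y: "integrable M (\<lambda>\<omega>. \<Prod>i\<in>I. g i (Y i \<omega>))"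
proof -
  have indep: "indep_vars (\<lambda>_. borel) (\<lambda>i \<omega>. g i (Y i \<omega>)) I"
    by (rule indep_vars_compose2[OF indep_vars_subset[OF Y_indep]]) (auto simp: assms(2))
  have integrable: "integrable M (\<lambda>\<omega>. g i (Y i \<omega>))" if "i \<in> I" for i
    using that assms(2,3) by (intro integrable_const_bound[where B = 1]) auto
  have "expectation (\<lambda>\<omega>. g i (Y i \<omega>)) = expectation (\<lambda>\<omega>. g i (s0 \<omega>))" if "i \<in> I" for i
    using integral_distr[of "Y i" M borel "g i"] integral_distr[of s0 M borel "g i"] Y_distr[of i]
      assms(2)[OF that] by simp
  then show "expectation (\<lambda>\<omega>. \<Prod>i\<in>I. g i (Y i \<omega>)) = (\<Prod>i\<in>I. expectation (\<lambda>\<omega>. g i (s0 \<omega>)))"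
    using indep_vars_lebesgue_integral[OF assms(1) indep integrable] by simp
  show "integrable M (\<lambda>\<omega>. \<Prod>i\<in>I. g i (Y i \<omega>))"
    using indep_vars_integrable[OF assms(1) indep integrable] by simp
qed

lemma prob_all_le_eq_0:
  assumes "tail l > 0"
  shows "prob {\<omega> \<in> space M. \<forall>i. Y i \<omega> \<le> l} = 0"
proof -
  let ?q = "1 - tail l"
  have "prob {\<omega> \<in> space M. \<forall>i. Y i \<omega> \<le> l} \<le> ?q ^ m" for m
  proof -
    have "prob {\<omega> \<in> space M. \<forall>i. Y i \<omega> \<le> l} \<le> prob {\<omega> \<in> space M. \<forall>i<m. Y i \<omega> \<le> l}"
      by (rule finite_measure_mono) auto
    also have "\<dots> = expectation (\<lambda>\<omega>. \<Prod>i<m. indicator {..l} (Y i \<omega>))"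
      by (subst Bochner_Integration.integral_cong[where g = "indicator {\<omega> \<in> space M. \<forall>i<m. Y i \<omega> \<le> l}"])
         (auto simp: indicator_def prod_zero_iff)
    also have "\<dots> = ?q ^ m"
      by (subst expectation_prod_Y) (auto simp: expectation_indicator_s0 prob_le_eq_one_minus_tail)
    finally show ?thesis .
  qed
  moreover have "(\<lambda>m. ?q ^ m) \<longlonglongrightarrow> 0" using assms by (intro LIMSEQ_power_zero) simp
  ultimately have "prob {\<omega> \<in> space M. \<forall>i. Y i \<omega> \<le> l} \<le> 0" by (intro LIMSEQ_le_const) auto
  then show ?thesis by (simp add: measure_le_0_iff)
qed

lemma measurable_first_exceed [measurable]:
  "(\<lambda>\<omega>. first_exceed Y l \<omega>) \<in> measurable M (count_space UNIV)"
  unfolding first_exceed_eq_Least by measurable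

lemma measurable_sbar [measurable]: "(\<lambda>\<omega>. sbar L Y h l \<omega>) \<in> borel_measurable M"
  unfolding sbar_eq_sum_window by (rule measurable_compose_countable[OF _ measurable_first_exceed]) measurable

text \<open>The summand for \<open>n\<close> of the capped-ratio bound on the event \<open>{n\<^sub>l = k, window sum \<ge> x}\<close>.\<close>

definition window_term :: "real \<Rightarrow> real \<Rightarrow> nat \<Rightarrow> nat \<Rightarrow> 'a \<Rightarrow> real" where
  "window_term l x k n \<omega> = indicator {l<..} (Y k \<omega>) * capped_ratio x (Y n \<omega>)
                             * (\<Prod>i\<in>{..<k} - {n}. indicator {..l} (Y i \<omega>))"

lemma window_term_nonneg: "0 \<le> window_term l x k n \<omega>"
  by (simp add: window_term_def capped_ratio_nonneg prod_nonneg)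

lemma
  assumes "n \<noteq> k"
  shows integrable_window_term: "integrable M (window_term l x k n)"
    and expectation_window_term:
      "expectation (window_term l x k n) = tail l * capped_mean x * (1 - tail l) ^ card ({..<k} - {n})"
proof -
  define g where "g i y = (if i = n then capped_ratio x y
                           else if i = k then indicator {l<..} y else (indicator {..l} y :: real))" for i y
  define J where "J = {..<k} - {n}"
  have J: "finite J" "n \<notin> J" "k \<notin> J" by (auto simp: J_def)
  let ?I = "insert k (insert n J)"
  have window_term_eq: "window_term l x k n = (\<lambda>\<omega>. \<Prod>i\<in>?I. g i (Y i \<omega>))"
  proof
    fix \<omega>
    have "(\<Prod>i\<in>J. g i (Y i \<omega>)) = (\<Prod>i\<in>J. indicator {..l} (Y i \<omega>))"
      using J by (intro prod.cong) (auto simp: g_def)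
    then show "window_term l x k n \<omega> = (\<Prod>i\<in>?I. g i (Y i \<omega>))"
      using assms(1) J by (simp add: window_term_def g_def J_def[symmetric])
  qed
  have g_measurable: "g i \<in> borel_measurable borel" for i
    unfolding g_def by (cases "i = n"; cases "i = k") auto
  have g_bounded: "\<bar>g i y\<bar> \<le> 1" for i y
    using capped_ratio_nonneg[of x y] capped_ratio_le_one[of x y] by (auto simp: g_def indicator_def)
  show "integrable M (window_term l x k n)"
    unfolding window_term_eq by (intro integrable_prod_Y g_measurable g_bounded) (simp add: J)
  have factors: "(\<Prod>i\<in>J. expectation (\<lambda>\<omega>. g i (s0 \<omega>))) = (\<Prod>i\<in>J. 1 - tail l)"
  proof (rule prod.cong)
    fix i assume "i \<in> J"
    then have "i \<noteq> n" "i \<noteq> k" using J by auto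
    then show "expectation (\<lambda>\<omega>. g i (s0 \<omega>)) = 1 - tail l"
      by (simp add: g_def expectation_indicator_s0 prob_le_eq_one_minus_tail)
  qed simp
  have "expectation (window_term l x k n) = (\<Prod>i\<in>?I. expectation (\<lambda>\<omega>. g i (s0 \<omega>)))"
    unfolding window_term_eq by (intro expectation_prod_Y g_measurable g_bounded) (simp add: J)
  then show "expectation (window_term l x k n) = tail l * capped_mean x * (1 - tail l) ^ card ({..<k} - {n})"
    using assms(1) J factors by (simp add: g_def expectation_indicator_s0 J_def[symmetric])
qed

text \<open>For \<open>n < k\<close> the window term has only \<open>k - 1\<close> factors \<open>1 - tail l\<close>; the extra factor on the left
  makes the bound uniform in \<open>n\<close>.\<close>

lemma prob_window_event_le:
  assumes x: "x > 0" and R: "R \<ge> 0"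
  shows "prob {\<omega> \<in> space M. (\<forall>i<k. Y i \<omega> \<le> l) \<and> l < Y k \<omega> \<and> x \<le> (\<Sum>n\<in>window R k. Y n \<omega>)}
           * (1 - tail l)
         \<le> 2 * R * capped_mean x * tail l * (1 - tail l) ^ k"
proof -
  define A where "A = {\<omega> \<in> space M. (\<forall>i<k. Y i \<omega> \<le> l) \<and> l < Y k \<omega> \<and> x \<le> (\<Sum>n\<in>window R k. Y n \<omega>)}"
  let ?q = "1 - tail l" and ?W = "window R k"
  have W_ne: "n \<noteq> k" if "n \<in> ?W" for n using that center_notin_window by blast
  have A_sets: "A \<in> sets M" unfolding A_def by measurable
  have indicator_le: "indicator A \<omega> \<le> (\<Sum>n\<in>?W. window_term l x k n \<omega>)" for \<omega>
  proof (cases "\<omega> \<in> A")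
    case True
    then have "window_term l x k n \<omega> = capped_ratio x (Y n \<omega>)" if "n \<in> ?W" for n
      using W_ne[OF that] by (auto simp: A_def window_term_def intro!: prod.neutral)
    then show ?thesis
      using True one_le_sum_capped_ratio[OF finite_window x] by (simp add: A_def)
  qed (simp add: window_term_nonneg sum_nonneg)
  have q: "0 \<le> ?q" "?q \<le> 1" using prob_le_eq_one_minus_tail[of l] by auto
  have "prob A = expectation (indicator A)" using A_sets by simp
  also have "\<dots> \<le> expectation (\<lambda>\<omega>. \<Sum>n\<in>?W. window_term l x k n \<omega>)"
    using A_sets W_ne integrable_window_term
    by (intro Bochner_Integration.integral_mono indicator_le) (auto simp: emeasure_eq_measure)
  also have "\<dots> = (\<Sum>n\<in>?W. tail l * capped_mean x * ?q ^ card ({..<k} - {n}))"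
    using W_ne integrable_window_term expectation_window_term
    by (subst Bochner_Integration.integral_sum) auto
  finally have "prob A * ?q \<le> (\<Sum>n\<in>?W. tail l * capped_mean x * ?q ^ card ({..<k} - {n})) * ?q"
    using q(1) by (rule mult_right_mono)
  also have "\<dots> = (\<Sum>n\<in>?W. tail l * capped_mean x * ?q ^ Suc (card ({..<k} - {n})))"
    by (simp add: sum_distrib_left sum_distrib_right mult_ac)
  also have "\<dots> \<le> (\<Sum>n\<in>?W. tail l * capped_mean x * ?q ^ k)"
    using q capped_mean_nonneg[of x] by (intro sum_mono mult_left_mono power_decreasing) (auto simp: card_Diff_singleton_if)
  also have "\<dots> \<le> 2 * R * (tail l * capped_mean x * ?q ^ k)"
    using card_window_le[OF R, of k] q capped_mean_nonneg[of x] by (simp add: mult_right_mono)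
  finally show ?thesis by (simp add: A_def mult_ac)
qed

lemma prob_sbar_ge_le:
  assumes x: "x > 0" and R: "L l / h \<ge> 0" and tail: "0 < tail l" "tail l < 1"
  shows "prob {\<omega> \<in> space M. x \<le> sbar L Y h l \<omega>} \<le> 2 * (L l / h) * capped_mean x / (1 - tail l)"
proof -
  define R where "R = L l / h"
  define Z where "Z = {\<omega> \<in> space M. \<forall>i. Y i \<omega> \<le> l}"
  define C where "C k = {\<omega> \<in> space M. (\<forall>i<k. Y i \<omega> \<le> l) \<and> l < Y k \<omega> \<and> x \<le> (\<Sum>n\<in>window R k. Y n \<omega>)}" for k
  define c where "c = 2 * R * capped_mean x * tail l / (1 - tail l)"
  let ?q = "1 - tail l"
  have Z_sets: "Z \<in> sets M" and C_sets: "C k \<in> sets M" for k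
    unfolding Z_def C_def by measurable
  have C_le: "prob (C k) \<le> c * ?q ^ k" for k
    using prob_window_event_le[OF x R[folded R_def], of k l] tail by (simp add: C_def c_def field_simps)
  have geometric: "summable (\<lambda>k. c * ?q ^ k)" using tail by (intro summable_mult summable_geometric) simp
  have summable_C: "summable (\<lambda>k. prob (C k))"
    by (rule summable_comparison_test'[OF geometric]) (simp add: C_le)
  have "{\<omega> \<in> space M. x \<le> sbar L Y h l \<omega>} \<subseteq> Z \<union> (\<Union>k. C k)"
  proof
    fix \<omega> assume \<omega>: "\<omega> \<in> {\<omega> \<in> space M. x \<le> sbar L Y h l \<omega>}"
    show "\<omega> \<in> Z \<union> (\<Union>k. C k)"
    proof (cases "\<omega> \<in> Z")
      case False
      then have "\<exists>j. l < Y j \<omega>" using \<omega> by (auto simp: Z_def not_le)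
      define k where "k = (LEAST j. l < Y j \<omega>)"
      have k: "l < Y k \<omega>" "\<forall>i<k. Y i \<omega> \<le> l"
        unfolding k_def using LeastI_ex[OF \<open>\<exists>j. l < Y j \<omega>\<close>] not_less_Least not_le by blast+
      then have "sbar L Y h l \<omega> = (\<Sum>n\<in>window R k. Y n \<omega>)"
        by (simp add: sbar_eq_sum_window first_exceed_eqI R_def)
      then show ?thesis using \<omega> k by (auto simp: C_def)
    qed simp
  qed
  then have "prob {\<omega> \<in> space M. x \<le> sbar L Y h l \<omega>} \<le> prob (Z \<union> (\<Union>k. C k))"
    using Z_sets C_sets by (intro finite_measure_mono) auto
  also have "\<dots> \<le> prob Z + prob (\<Union>k. C k)"
    using Z_sets C_sets by (intro measure_Un_le) auto
  also have "prob Z = 0" unfolding Z_def using tail(1) by (rule prob_all_le_eq_0)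
  also have "prob (\<Union>k. C k) \<le> (\<Sum>k. prob (C k))"
    using C_sets summable_C by (intro finite_measure_subadditive_countably) auto
  also have "\<dots> \<le> (\<Sum>k. c * ?q ^ k)" by (rule suminf_le[OF C_le summable_C geometric])
  also have "\<dots> = c / tail l" using tail by (simp add: suminf_mult suminf_geometric)
  also have "\<dots> = 2 * R * capped_mean x / ?q" using tail by (simp add: c_def)
  finally show ?thesis by (simp add: R_def)
qed

lemma prob_sbar_lt_ge:
  assumes y0: "y0 > 0" and doubling: "\<And>z. y0 \<le> z \<Longrightarrow> tail z \<le> 5/4 * tail (2 * z)"
    and tail_pos: "\<And>y. 0 < tail y"
    and h: "2 \<le> h" "2 / tail y0 \<le> h" and h_sq: "h^2 \<le> 1 / tail l"
    and tail_ratio: "tailL M s0 l * (1 - 1/h) < tailL M s0 (l / h^3)"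
  shows "1 - (22 / h + 6 * y0 / (tail l ^ 2 * l)) \<le> prob {\<omega> \<in> space M. sbar (tailL M s0) Y h l \<omega> < l / h^3}"
proof -
  define x where "x = l / h^3"
  define R where "R = 1 / tail l / h"
  have ratio: "1 / tail l * (1 - 1/h) < 1 / tail (l / h^3)" using tail_ratio by (simp add: tailL_def)
  note thresholds = tail_threshold_bounds[where T = tail, OF tail_pos tail_antimono h h_sq ratio, folded x_def]
  have x_pos: "0 < x" using thresholds(3) y0 by linarith
  have "0 < h^3" using h(1) by simp
  then have l_pos: "0 < l" using x_pos by (simp add: x_def zero_less_divide_iff)
  have R_tail_x: "R * tail x \<le> 2 / h"
    using thresholds(2) tail_pos[of l] h(1) by (simp add: R_def field_simps)
  have "R / x = h^2 / (tail l * l)"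
    using h(1) by (simp add: R_def x_def field_simps power2_eq_square power3_eq_cube)
  also have "\<dots> \<le> 1 / (tail l ^ 2 * l)"
    using h_sq tail_pos[of l] l_pos by (simp add: field_simps power2_eq_square)
  finally have R_div_x: "R / x \<le> 1 / (tail l ^ 2 * l)" .
  have "R * capped_mean x \<le> R * (4 * tail x + 2 * y0 / x)"
    using capped_mean_le[OF y0 doubling] thresholds(3) tail_pos[of l] h(1)
    by (intro mult_left_mono) (auto simp: R_def)
  also have "\<dots> = 4 * (R * tail x) + 2 * y0 * (R / x)" by (simp add: field_simps)
  also have "\<dots> \<le> 4 * (2 / h) + 2 * y0 * (1 / (tail l ^ 2 * l))"
    using R_tail_x R_div_x y0 by (intro add_mono mult_left_mono) auto
  finally have R_mean: "R * capped_mean x \<le> 8 / h + 2 * y0 / (tail l ^ 2 * l)" by simp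
  have "prob {\<omega> \<in> space M. x \<le> sbar (tailL M s0) Y h l \<omega>} \<le> 2 * R * capped_mean x / (1 - tail l)"
    using prob_sbar_ge_le[OF x_pos, of "tailL M s0" l h] tail_pos[of l] thresholds(1) h(1)
    by (simp add: tailL_def R_def)
  also have "\<dots> \<le> 2 * R * capped_mean x / (3/4)"
    using thresholds(1) capped_mean_nonneg[of x] tail_pos[of l] h(1) by (intro divide_left_mono) (auto simp: R_def)
  also have "\<dots> \<le> 8/3 * (8 / h + 2 * y0 / (tail l ^ 2 * l))" using R_mean by simp
  also have "\<dots> \<le> 22 / h + 6 * y0 / (tail l ^ 2 * l)"
    using h(1) y0 tail_pos[of l] l_pos by (simp add: field_simps)
  finally have "prob {\<omega> \<in> space M. x \<le> sbar (tailL M s0) Y h l \<omega>} \<le> 22 / h + 6 * y0 / (tail l ^ 2 * l)" .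
  moreover have "prob {\<omega> \<in> space M. sbar (tailL M s0) Y h l \<omega> < x} = 1 - prob {\<omega> \<in> space M. x \<le> sbar (tailL M s0) Y h l \<omega>}"
    by (subst prob_compl[symmetric]) (auto intro!: arg_cong[where f = prob])
  ultimately show ?thesis by (simp add: x_def)
qed

end

theorem proposition3p8:
  fixes M :: "'a measure" and \<sigma>0 :: "'a \<Rightarrow> real" and Y :: "nat \<Rightarrow> 'a \<Rightarrow> real"
    and h :: "real \<Rightarrow> real"
  assumes "prob_space M"
    and "\<sigma>0 \<in> borel_measurable M"
    and "AE \<omega> in M. \<sigma>0 \<omega> > 0"
    and "\<forall>v>0. ((\<lambda>u. tailL M \<sigma>0 (u * v) / tailL M \<sigma>0 u) \<longlongrightarrow> 1) at_top"
    and "\<And>n. Y n \<in> borel_measurable M"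
    and "prob_space.indep_vars M (\<lambda>_. borel) Y UNIV"
    and "\<And>n. distr M borel (Y n) = distr M borel \<sigma>0"
    and "filterlim h at_top at_top"
    and "(\<lambda>t. (h t)\<^sup>2) \<in> o(\<lambda>t. rt (tailL M \<sigma>0) t)"
    and "\<forall>\<^sub>F t in at_top.
           tailL M \<sigma>0 (ellt (tailL M \<sigma>0) t / (h t)^3)
             > tailL M \<sigma>0 (ellt (tailL M \<sigma>0) t) * (1 - 1 / h t) \<and>
           tailL M \<sigma>0 (ellt (tailL M \<sigma>0) t * (h t)^3)
             < tailL M \<sigma>0 (ellt (tailL M \<sigma>0) t) * (1 + 1 / h t)"
  shows "((\<lambda>t. measure M {\<omega> \<in> space M.
             sbar (tailL M \<sigma>0) Y (h t) (ellt (tailL M \<sigma>0) t) \<omega>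
               < ellt (tailL M \<sigma>0) t / (h t)^3}) \<longlongrightarrow> 1) at_top"
proof -
  interpret iid_sequence M \<sigma>0 Y
    using assms(1,2,5-7) by (simp add: iid_sequence_def iid_sequence_axioms_def)
  have slow: "((\<lambda>u. (1 / tail (u * 2)) / (1 / tail u)) \<longlongrightarrow> 1) at_top"
    using assms(4) by (simp add: tailL_def)
  have tail_pos: "\<And>y. 0 < tail y" using tail_antimono slow by (intro slowly_varying_tail_pos) auto
  obtain y0 where y0: "y0 > 0" and doubling: "\<And>z. y0 \<le> z \<Longrightarrow> tail z \<le> 5/4 * tail (2 * z)"
    using slowly_varying_tail_doubling[OF tail_pos slow] by blast
  define l where "l = ellt (tailL M \<sigma>0)"
  have h_sq: "eventually (\<lambda>t. h t ^ 2 \<le> 1 / tail (l t)) at_top"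
    using landau_o.smallD[OF assms(9) zero_less_one] by eventually_elim (simp add: rt_def tailL_def l_def)
  define B where "B = (\<lambda>t. 22 / h t + 6 * y0 / (tail (l t) ^ 2 * l t))"
  have "(B \<longlongrightarrow> 0) at_top" unfolding B_def
    using tendsto_sbar_error_bound[where T = tail, OF y0 tail_pos tail_antimono doubling assms(8) h_sq] .
  then have lower_lim: "((\<lambda>t. 1 - B t) \<longlongrightarrow> 1) at_top" using tendsto_diff[OF tendsto_const] by fastforce
  have lower_ev: "eventually (\<lambda>t. 1 - B t \<le> measure M {\<omega> \<in> space M.
             sbar (tailL M \<sigma>0) Y (h t) (l t) \<omega> < l t / (h t)^3}) at_top"
    using assms(8)[unfolded filterlim_at_top, rule_format, of "max 2 (2 / tail y0)"] h_sq assms(10)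
  proof eventually_elim
    case (elim t)
    then show ?case
      unfolding B_def l_def by (intro prob_sbar_lt_ge[OF y0 doubling tail_pos]) (simp_all add: l_def)
  qed
  show ?thesis
    unfolding l_def[symmetric] by (rule tendsto_sandwich[OF lower_ev _ lower_lim tendsto_const]) simp
qed

end
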